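(* Let $P$ be the group of order $32$ with GAP identifier ${\rm SmallGroup}(32,7)$ (of the form $(C_8\rtimes C_2)\rtimes C_2$), and let $M\le P$ be a maximal subgroup with $M\cong C_2\times D_8$. Then $\psi(P)=167$ and $\psi(M)=39$. Consequently, for every odd positive integer $m$, the group $G=P\times C_m$ and its maximal subgroup $H=M\times C_m$ satisfy $$\psi(G)=167\,\psi(C_m)\ >\ 156\,\psi(C_m)=\psi(H)\,|G:H|^2,$$ so the inequality $\psi(G)\le \psi(H)|G:H|^2$ fails for the subgroup $H\le G$.
   Context: All groups are finite. For a finite group $G$, $\psi(G)=\sum_{g\in G} o(g)$, where $o(g)$ is the order of $g$. $C_n$ denotes the cyclic group of order $n$ and $D_8$ the dihedral group of order $8$. ${\rm SmallGroup}(32,7)$ refers to the group numbered 7 among groups of order 32 in the GAP Small Groups Library; it has a maximal subgroup isomorphic to $C_2\times D_8$. *)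

theory Defs
  imports "HOL-Algebra.Algebra"
begin

definition psi :: "('a, 'b) monoid_scheme \<Rightarrow> nat" where
  "psi G = (\<Sum>g\<in>carrier G. group.ord G g)"

definition maximal_subgroup :: "'a set \<Rightarrow> ('a, 'b) monoid_scheme \<Rightarrow> bool" where
  "maximal_subgroup M G \<longleftrightarrow> subgroup M G \<and> M \<noteq> carrier G \<and>
     (\<forall>K. subgroup K G \<and> M \<subseteq> K \<longrightarrow> K = M \<or> K = carrier G)"

abbreviation cyclic_group :: "nat \<Rightarrow> int monoid" where
  "cyclic_group n \<equiv> integer_mod_group n"

text \<open>Dihedral group of order 8: pairs (r,s) standing for rho^r sigma^s,
  with sigma rho sigma = rho^-1.\<close>
definition D8 :: "(nat \<times> nat) monoid" where
  "D8 = \<lparr>carrier = {0..<4} \<times> {0..<2},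
         monoid.mult = (\<lambda>(r, s) (r', s'). ((r + (if s = 0 then r' else 4 - r')) mod 4, (s + s') mod 2)),
         one = (0, 0)\<rparr>"

text \<open>SmallGroup(32,7) = (C8 \<rtimes> C2) \<rtimes> C2, given by the presentation
  < x, y, z | x^8 = y^2 = z^2 = 1, y x y = x^5, z y z = y, z x z = x y >.
  The triple (i,j,k) with i < 8, j < 2, k < 2 stands for x^i y^j z^k.
  Conjugation by z maps x^i y^j to (x y)^i y^j = x^(i + 4 (i div 2)) y^(i + j).\<close>
definition SG32_7 :: "(nat \<times> nat \<times> nat) monoid" where
  "SG32_7 = \<lparr>carrier = {0..<8} \<times> {0..<2} \<times> {0..<2},
     monoid.mult = (\<lambda>(i, j, k) (i', j', k').
        let i'' = (if k = 0 then i' else (i' + 4 * (i' div 2)) mod 8);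
            j'' = (if k = 0 then j' else (i' + j') mod 2)
        in ((i + i'' + 4 * j * i'') mod 8, (j + j'') mod 2, (k + k') mod 2)),
     one = (0, 0, 0)\<rparr>"

end

theory Submission
  imports Defs
begin

text \<open>
  Element orders multiply across a direct product of groups of coprime orders, so for odd \<open>m\<close>
  we get \<open>\<psi>(P \<times> C\<^sub>m) = \<psi>(P) \<psi>(C\<^sub>m)\<close> and \<open>\<psi>(M \<times> C\<^sub>m) = \<psi>(M) \<psi>(C\<^sub>m)\<close>, while \<open>M \<times> C\<^sub>m\<close>
  has index 2, hence is maximal, in \<open>P \<times> C\<^sub>m\<close>; and \<open>39 \<cdot> 2\<^sup>2 = 156 < 167\<close>. Since \<open>\<psi>\<close> is an
  isomorphism invariant, what remains is \<open>\<psi>(P) = 167\<close> and \<open>\<psi>(C\<^sub>2 \<times> D\<^sub>8) = 39\<close>, computed element by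
  element: every order divides 8, so it is read off from successive squares. A subgroup
  \<open>M \<cong> C\<^sub>2 \<times> D\<^sub>8\<close> of index 2 exists: \<open>\<langle>x\<^sup>2, y, z\<rangle>\<close>, the elements \<open>x\<^sup>i y\<^sup>j z\<^sup>k\<close> with \<open>i\<close> even.
\<close>

lemma group_by_bij_hom:
  assumes "group H" and f: "bij_betw f (carrier G) (carrier H)"
    and closed: "\<And>x y. x \<in> carrier G \<Longrightarrow> y \<in> carrier G \<Longrightarrow> x \<otimes>\<^bsub>G\<^esub> y \<in> carrier G"
    and f_mult: "\<And>x y. x \<in> carrier G \<Longrightarrow> y \<in> carrier G \<Longrightarrow> f (x \<otimes>\<^bsub>G\<^esub> y) = f x \<otimes>\<^bsub>H\<^esub> f y"
    and one: "\<one>\<^bsub>G\<^esub> \<in> carrier G" "f \<one>\<^bsub>G\<^esub> = \<one>\<^bsub>H\<^esub>"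
  shows "group G"
proof -
  interpret H: group H by fact
  have inj: "inj_on f (carrier G)" and f_carrier: "\<And>x. x \<in> carrier G \<Longrightarrow> f x \<in> carrier H"
    using f by (auto simp: bij_betw_def)
  show ?thesis
  proof (rule groupI)
    fix x y z assume "x \<in> carrier G" "y \<in> carrier G" "z \<in> carrier G"
    then show "x \<otimes>\<^bsub>G\<^esub> y \<otimes>\<^bsub>G\<^esub> z = x \<otimes>\<^bsub>G\<^esub> (y \<otimes>\<^bsub>G\<^esub> z)"
      by (intro inj_onD[OF inj]) (simp_all add: closed f_mult f_carrier H.m_assoc)
  next
    fix x assume x: "x \<in> carrier G"
    then show "\<one>\<^bsub>G\<^esub> \<otimes>\<^bsub>G\<^esub> x = x"
      by (intro inj_onD[OF inj]) (simp_all add: closed f_mult f_carrier one)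
    obtain y where y: "y \<in> carrier G" "f y = inv\<^bsub>H\<^esub> (f x)"
      using f f_carrier[OF x] by (metis H.inv_closed bij_betw_iff_bijections)
    have "y \<otimes>\<^bsub>G\<^esub> x = \<one>\<^bsub>G\<^esub>"
      by (rule inj_onD[OF inj]) (use x y one in \<open>simp_all add: closed f_mult f_carrier\<close>)
    with y show "\<exists>y\<in>carrier G. y \<otimes>\<^bsub>G\<^esub> x = \<one>\<^bsub>G\<^esub>" by blast
  qed (use closed one in auto)
qed

lemma less_2_cases: "(k::nat) < 2 \<Longrightarrow> k = 0 \<or> k = 1"
  by auto

text \<open>The pair \<open>(x, k)\<close> stands for \<open>x t\<^sup>k\<close>, where \<open>t\<close> has order 2 and acts on \<open>G\<close> by \<open>s\<close>.\<close>

definition involution_sdp :: "('a, 'b) monoid_scheme \<Rightarrow> ('a \<Rightarrow> 'a) \<Rightarrow> ('a \<times> nat) monoid" where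
  "involution_sdp G s = \<lparr>carrier = carrier G \<times> {0..<2},
     monoid.mult = (\<lambda>(x, k) (y, k'). (x \<otimes>\<^bsub>G\<^esub> (if k = 0 then y else s y), (k + k') mod 2)),
     one = (\<one>\<^bsub>G\<^esub>, 0)\<rparr>"

lemma group_involution_sdp:
  assumes "group G" and s: "s \<in> hom G G" and s_s: "\<And>x. x \<in> carrier G \<Longrightarrow> s (s x) = x"
  shows "group (involution_sdp G s)"
proof -
  interpret G: group G by fact
  have s_hom: "group_hom G G s"
    using s \<open>group G\<close> by (intro group_hom.intro) (auto simp: group_hom_axioms_def)
  let ?S = "involution_sdp G s"
  show ?thesis
  proof (rule groupI)
    fix x y z assume "x \<in> carrier ?S" "y \<in> carrier ?S" "z \<in> carrier ?S"
    then obtain a k b l c m where "x = (a, k)" "y = (b, l)" "z = (c, m)"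
      and "a \<in> carrier G" "b \<in> carrier G" "c \<in> carrier G" "k < 2" "l < 2" "m < 2"
      by (auto simp: involution_sdp_def)
    then show "x \<otimes>\<^bsub>?S\<^esub> y \<otimes>\<^bsub>?S\<^esub> z = x \<otimes>\<^bsub>?S\<^esub> (y \<otimes>\<^bsub>?S\<^esub> z)"
      using less_2_cases[of k] less_2_cases[of l] less_2_cases[of m]
      by (auto simp: involution_sdp_def G.m_assoc s_s group_hom.hom_mult[OF s_hom]
          group_hom.hom_closed[OF s_hom])
  next
    fix x assume "x \<in> carrier ?S"
    then obtain a k where x: "x = (a, k)" "a \<in> carrier G" "k = 0 \<or> k = 1"
      using less_2_cases by (auto simp: involution_sdp_def)
    let ?y = "if k = 0 then (inv\<^bsub>G\<^esub> a, k) else (s (inv\<^bsub>G\<^esub> a), k)"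
    have "?y \<otimes>\<^bsub>?S\<^esub> x = \<one>\<^bsub>?S\<^esub>" "?y \<in> carrier ?S"
      using x by (auto simp: involution_sdp_def group_hom.hom_mult[OF s_hom, symmetric]
          group_hom.hom_one[OF s_hom] group_hom.hom_closed[OF s_hom])
    then show "\<exists>y\<in>carrier ?S. y \<otimes>\<^bsub>?S\<^esub> x = \<one>\<^bsub>?S\<^esub>" by blast
  qed (auto simp: involution_sdp_def group_hom.hom_closed[OF s_hom])
qed

definition mod_group :: "nat \<Rightarrow> nat monoid" where
  "mod_group n = \<lparr>carrier = {0..<n}, monoid.mult = (\<lambda>a b. (a + b) mod n), one = 0\<rparr>"

lemma group_mod_group: "0 < n \<Longrightarrow> group (mod_group n)"
proof (rule groupI)
  fix x assume "0 < n" and x: "x \<in> carrier (mod_group n)"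
  then show "\<exists>y\<in>carrier (mod_group n). y \<otimes>\<^bsub>mod_group n\<^esub> x = \<one>\<^bsub>mod_group n\<^esub>"
    by (intro bexI[of _ "(n - x) mod n"]) (auto simp: mod_group_def mod_add_left_eq)
qed (auto simp: mod_group_def mod_simps add.assoc)

lemma ord_iso_eq:
  assumes "group G" "group H" and h: "h \<in> iso G H" and x: "x \<in> carrier G"
  shows "group.ord H (h x) = group.ord G x"
proof -
  interpret G: group G by fact
  interpret H: group H by fact
  have hom: "group_hom G H h"
    using assms(1,2) h by (intro group_hom.intro) (auto simp: group_hom_axioms_def iso_def)
  have inj: "inj_on h (carrier G)"
    using h by (simp add: iso_def bij_betw_def)
  have "h x [^]\<^bsub>H\<^esub> n = \<one>\<^bsub>H\<^esub> \<longleftrightarrow> x [^]\<^bsub>G\<^esub> n = \<one>\<^bsub>G\<^esub>" for n :: nat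
    using x inj_onD[OF inj, of "x [^]\<^bsub>G\<^esub> n" "\<one>\<^bsub>G\<^esub>"]
    by (auto simp: group_hom.hom_nat_pow[OF hom, symmetric] group_hom.hom_one[OF hom])
  then show ?thesis
    using H.ord_unique[OF group_hom.hom_closed[OF hom x], of "G.ord x"] G.pow_eq_id[OF x] by simp
qed

lemma psi_iso_eq:
  assumes "group G" "group H" and h: "h \<in> iso G H"
  shows "psi G = psi H"
proof -
  have "psi G = (\<Sum>x\<in>carrier G. group.ord H (h x))"
    unfolding psi_def using ord_iso_eq[OF assms] by simp
  also have "\<dots> = psi H"
    unfolding psi_def using h by (simp add: iso_def sum.reindex_bij_betw)
  finally show ?thesis .
qed

lemma DirProd_nat_pow:
  "(a, b) [^]\<^bsub>G \<times>\<times> H\<^esub> (n::nat) = (a [^]\<^bsub>G\<^esub> n, b [^]\<^bsub>H\<^esub> n)"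
  by (induction n) auto

lemma ord_DirProd_coprime:
  assumes "group G" "group H" and cop: "coprime (order G) (order H)"
    and x: "x \<in> carrier G" and y: "y \<in> carrier H"
  shows "group.ord (G \<times>\<times> H) (x, y) = group.ord G x * group.ord H y"
proof -
  interpret G: group G by fact
  interpret H: group H by fact
  interpret GH: group "G \<times>\<times> H" by (rule DirProd_group) fact+
  have cop_ord: "coprime (G.ord x) (H.ord y)"
    using coprime_divisors[OF G.ord_dvd_group_order[OF x] H.ord_dvd_group_order[OF y] cop] .
  have "G.ord x dvd n \<and> H.ord y dvd n \<longleftrightarrow> G.ord x * H.ord y dvd n" for n
    using divides_mult[OF _ _ cop_ord] dvd_mult_left dvd_mult_right by metis
  then have "(x, y) [^]\<^bsub>G \<times>\<times> H\<^esub> n = \<one>\<^bsub>G \<times>\<times> H\<^esub> \<longleftrightarrow> G.ord x * H.ord y dvd n" for n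
    using G.pow_eq_id[OF x] H.pow_eq_id[OF y] by (simp add: DirProd_nat_pow)
  then show ?thesis
    using GH.ord_unique[of "(x, y)"] x y by simp
qed

lemma psi_DirProd_coprime:
  assumes "group G" "group H" and "coprime (order G) (order H)"
  shows "psi (G \<times>\<times> H) = psi G * psi H"
proof -
  have "psi (G \<times>\<times> H) = (\<Sum>(x, y)\<in>carrier G \<times> carrier H. group.ord G x * group.ord H y)"
    unfolding psi_def using ord_DirProd_coprime[OF assms] by (intro sum.cong) auto
  then show ?thesis
    by (simp add: psi_def sum_product sum.cartesian_product)
qed

lemma psi_pos:
  fixes G (structure)
  assumes "group G" "finite (carrier G)"
  shows "0 < psi G"
proof -
  interpret group G by fact
  have "ord \<one> \<le> psi G"
    unfolding psi_def using assms(2) by (intro member_le_sum) simp_all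
  then show ?thesis by simp
qed

lemma maximal_subgroup_index_two:
  fixes G (structure)
  assumes "group G" and fin: "finite (carrier G)" and H: "subgroup H G" and index: "order G = 2 * card H"
  shows "maximal_subgroup H G"
  unfolding maximal_subgroup_def
proof (intro conjI allI impI H)
  interpret group G by fact
  have card_H: "0 < card H"
    using subgroup.finite_imp_card_positive[OF H fin] .
  then show "H \<noteq> carrier G"
    using index by (auto simp: order_def)
  fix K assume K: "subgroup K G \<and> H \<subseteq> K"
  then have K_sub: "K \<subseteq> carrier G" and "finite K"
    using fin by (auto intro: finite_subset dest: subgroup.subset)
  then have "card H \<le> card K"
    using K by (simp add: card_mono)
  obtain r where r: "r * card K = 2 * card H"
    using lagrange K index by metis
  have "r * card K \<le> 2 * card K" "0 < card K"
    using r \<open>card H \<le> card K\<close> card_H by linarith+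
  then have "r \<le> 2"
    by simp
  moreover have "r \<noteq> 0"
    using r card_H by (cases "r = 0") auto
  ultimately have "r = 1 \<or> r = 2"
    by auto
  then show "K = H \<or> K = carrier G"
  proof
    assume "r = 1"
    then have "card K = card (carrier G)" using r index by (simp add: order_def)
    then show ?thesis using card_subset_eq[OF fin K_sub] by simp
  next
    assume "r = 2"
    then have "card H = card K" using r by simp
    then show ?thesis using card_subset_eq[OF \<open>finite K\<close>, of H] K by simp
  qed
qed

lemma maximal_subgroup_DirProd_index_two:
  assumes P: "group P" "finite (carrier P)" and C: "group C" "finite (carrier C)"
    and M: "subgroup M P" "order P = 2 * card M"
    and coprime: "coprime (order P) (order C)"
  shows "maximal_subgroup (M \<times> carrier C) (P \<times>\<times> C)"
    and "card (rcosets\<^bsub>P \<times>\<times> C\<^esub> (M \<times> carrier C)) = 2"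
    and "psi (P \<times>\<times> C) = psi P * psi C"
    and "psi ((P \<times>\<times> C)\<lparr>carrier := M \<times> carrier C\<rparr>) = psi (P\<lparr>carrier := M\<rparr>) * psi C"
proof -
  let ?G = "P \<times>\<times> C" and ?H = "M \<times> carrier C"
  have G: "group ?G" and fin: "finite (carrier ?G)"
    using P C by (simp_all add: DirProd_group)
  have H: "subgroup ?H ?G"
    by (rule DirProd_subgroups[OF P(1) M(1) C(1) group.subgroup_self[OF C(1)]])
  have index: "order ?G = 2 * card ?H"
    using M(2) by (simp add: order_def card_cartesian_product)
  show "maximal_subgroup ?H ?G"
    by (rule maximal_subgroup_index_two[OF G fin H index])
  have "card (rcosets\<^bsub>?G\<^esub> ?H) * card ?H = order ?G"
    by (rule group.lagrange[OF G H])
  with index subgroup.finite_imp_card_positive[OF H fin] show "card (rcosets\<^bsub>?G\<^esub> ?H) = 2"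
    by simp
  show "psi ?G = psi P * psi C"
    by (rule psi_DirProd_coprime[OF P(1) C(1) coprime])
  have "?G\<lparr>carrier := ?H\<rparr> = P\<lparr>carrier := M\<rparr> \<times>\<times> C"
    by (simp add: DirProd_def)
  moreover have "coprime (order (P\<lparr>carrier := M\<rparr>)) (order C)"
    using coprime M(2) by (simp add: order_def)
  ultimately show "psi (?G\<lparr>carrier := ?H\<rparr>) = psi (P\<lparr>carrier := M\<rparr>) * psi C"
    using psi_DirProd_coprime[OF subgroup.subgroup_is_group[OF M(1) P(1)] C(1)] by simp
qed

definition square :: "('a, 'b) monoid_scheme \<Rightarrow> 'a \<Rightarrow> 'a" where
  "square G x = x \<otimes>\<^bsub>G\<^esub> x"

definition ord_by_squaring :: "('a, 'b) monoid_scheme \<Rightarrow> 'a \<Rightarrow> nat" where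
  "ord_by_squaring G x =
    (if x = \<one>\<^bsub>G\<^esub> then 1 else if square G x = \<one>\<^bsub>G\<^esub> then 2
     else if square G (square G x) = \<one>\<^bsub>G\<^esub> then 4 else 8)"

lemma dvd_8_cases: "(d::nat) dvd 8 \<Longrightarrow> d = 1 \<or> d = 2 \<or> d = 4 \<or> d = 8"
proof -
  assume d: "d dvd 8"
  then have "0 < d" "d \<le> 8" by (auto intro: dvd_imp_le intro!: Nat.gr0I)
  then have "d \<in> {1, 2, 3, 4, 5, 6, 7, 8}" by auto
  with d show ?thesis by auto
qed

lemma ord_eq_ord_by_squaring:
  fixes G (structure)
  assumes "group G" and x: "x \<in> carrier G" and "square G (square G (square G x)) = \<one>"
  shows "group.ord G x = ord_by_squaring G x"
proof -
  interpret group G by fact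
  have square_pow: "square G (x [^] n) = x [^] (n * 2)" for n :: nat
    by (simp add: square_def x nat_pow_mult[symmetric] mult_2_right)
  have pow_2: "x [^] (2::nat) = square G x"
    and pow_4: "x [^] (4::nat) = square G (square G x)"
    and pow_8: "x [^] (8::nat) = square G (square G (square G x))"
    using square_pow[of 1] square_pow[of 2] square_pow[of 4] x by simp_all
  have "ord x dvd 8"
    using assms(3) pow_8 pow_eq_id[OF x] by simp
  then show ?thesis
    using pow_eq_id[OF x, of 2] pow_eq_id[OF x, of 4] ord_eq_1[OF x] pow_2 pow_4
    by (auto simp: ord_by_squaring_def dest!: dvd_8_cases)
qed

lemma psi_eq_sum_list:
  assumes "group G" and carrier: "carrier G = set xs" and "distinct xs"
    and exp_8: "\<forall>x \<in> set xs. square G (square G (square G x)) = \<one>\<^bsub>G\<^esub>"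
  shows "psi G = sum_list (map (ord_by_squaring G) xs)"
proof -
  have "psi G = (\<Sum>x\<in>set xs. ord_by_squaring G x)"
    unfolding psi_def carrier using ord_eq_ord_by_squaring[OF \<open>group G\<close>] exp_8 carrier
    by (intro sum.cong) auto
  with \<open>distinct xs\<close> show ?thesis
    by (simp add: sum_list_distinct_conv_sum_set)
qed

lemma less_4_cases: "(u::nat) < 4 \<Longrightarrow> u = 0 \<or> u = 1 \<or> u = 2 \<or> u = 3"
  by auto

lemma atLeast0_lessThan_2_eq: "{0..<2::nat} = {0, 1}"
  by auto

lemma atLeast0_lessThan_4_eq: "{0..<4::nat} = {0, 1, 2, 3}"
  by auto

lemma atLeast0_lessThan_8_eq: "{0..<8::nat} = {0, 1, 2, 3, 4, 5, 6, 7}"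
  by auto

lemma mod_add_mult_mod_eq: "((a::nat) + k * (b mod n)) mod n = (a + k * b) mod n"
  by (metis mod_add_right_eq mod_mult_right_eq)

lemma double_mod_8_div_2:
  assumes "even c"
  shows "((2 * u + c + 4 * j * c) mod 8) div 2 = ((u::nat) + c div 2) mod 4"
proof -
  obtain b where c: "c = 2 * b" using assms by blast
  have "(2 * u + c + 4 * j * c) mod 8 = 2 * ((u + b + 4 * (j * b)) mod 4)"
    using mod_mult_mult1[of 2 "u + b + 4 * (j * b)" 4] by (simp add: c algebra_simps)
  then show ?thesis by (simp add: c)
qed

text \<open>\<open>SG32_7\<close> is \<open>(C\<^sub>8 \<rtimes> C\<^sub>2) \<rtimes> C\<^sub>2\<close>: conjugation by \<open>y\<close> acts on \<open>\<langle>x\<rangle>\<close> and conjugation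
  by \<open>z\<close> on \<open>\<langle>x, y\<rangle>\<close>, both as involutive automorphisms.\<close>

definition conj_y :: "nat \<Rightarrow> nat" where
  "conj_y i = 5 * i mod 8"

definition conj_z :: "nat \<times> nat \<Rightarrow> nat \<times> nat" where
  "conj_z = (\<lambda>(i, j). ((i + 4 * (i div 2)) mod 8, (i + j) mod 2))"

definition C8_sdp_C2 :: "(nat \<times> nat) monoid" where
  "C8_sdp_C2 = involution_sdp (mod_group 8) conj_y"

lemma carrier_C8_sdp_C2: "carrier C8_sdp_C2 = {0, 1, 2, 3, 4, 5, 6, 7} \<times> {0, 1}"
  by (simp add: C8_sdp_C2_def involution_sdp_def mod_group_def
      atLeast0_lessThan_8_eq atLeast0_lessThan_2_eq)

lemma group_C8_sdp_C2: "group C8_sdp_C2"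
  unfolding C8_sdp_C2_def
proof (rule group_involution_sdp)
  show "group (mod_group 8)" by (simp add: group_mod_group)
  show "conj_y \<in> hom (mod_group 8) (mod_group 8)"
    by (auto simp: hom_def mod_group_def conj_y_def mod_simps algebra_simps)
  show "conj_y (conj_y x) = x" if "x \<in> carrier (mod_group 8)" for x
    using that by (auto simp: mod_group_def conj_y_def atLeast0_lessThan_8_eq)
qed

lemma group_C8_sdp_C2_sdp_C2: "group (involution_sdp C8_sdp_C2 conj_z)"
proof (rule group_involution_sdp[OF group_C8_sdp_C2])
  show "conj_z \<in> hom C8_sdp_C2 C8_sdp_C2"
    unfolding hom_def carrier_C8_sdp_C2
    by (simp add: C8_sdp_C2_def involution_sdp_def mod_group_def conj_y_def conj_z_def)
  show "conj_z (conj_z x) = x" if "x \<in> carrier C8_sdp_C2" for x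
    using that unfolding carrier_C8_sdp_C2 by (auto simp: conj_z_def)
qed

lemma group_SG32_7: "group SG32_7"
proof (rule group_by_bij_hom[where H = "involution_sdp C8_sdp_C2 conj_z" and f = "\<lambda>(i, j, k). ((i, j), k)"])
  show "group (involution_sdp C8_sdp_C2 conj_z)"
    by (rule group_C8_sdp_C2_sdp_C2)
  show "(\<lambda>(i, j, k). ((i, j), k)) (x \<otimes>\<^bsub>SG32_7\<^esub> y) =
    (\<lambda>(i, j, k). ((i, j), k)) x \<otimes>\<^bsub>involution_sdp C8_sdp_C2 conj_z\<^esub> (\<lambda>(i, j, k). ((i, j), k)) y"
    if xy: "x \<in> carrier SG32_7" "y \<in> carrier SG32_7" for x y
  proof -
    obtain i j k i' j' k' where "x = (i, j, k)" "y = (i', j', k')" "j < 2" "k < 2" "i' < 8"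
      using xy by (cases x, cases y) (auto simp: SG32_7_def)
    then show ?thesis
      using less_2_cases[of j] less_2_cases[of k]
      by (auto simp: SG32_7_def C8_sdp_C2_def involution_sdp_def mod_group_def conj_y_def conj_z_def
          Let_def mod_add_mult_mod_eq mod_simps algebra_simps)
  qed
  show "bij_betw (\<lambda>(i, j, k). ((i, j), k)) (carrier SG32_7) (carrier (involution_sdp C8_sdp_C2 conj_z))"
    by (rule bij_betwI[where g="\<lambda>((i, j), k). (i, j, k)"])
      (auto simp: SG32_7_def C8_sdp_C2_def involution_sdp_def mod_group_def)
qed (auto simp: SG32_7_def C8_sdp_C2_def involution_sdp_def mod_group_def Let_def)

lemma finite_carrier_SG32_7: "finite (carrier SG32_7)"
  by (simp add: SG32_7_def)

lemma order_SG32_7: "order SG32_7 = 32"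
  by (simp add: order_def SG32_7_def card_cartesian_product)

lemma one_SG32_7: "\<one>\<^bsub>SG32_7\<^esub> = (0, 0, 0)"
  by (simp add: SG32_7_def)

lemma psi_SG32_7: "psi SG32_7 = 167"
proof -
  let ?xs = "List.product [0, 1, 2, 3, 4, 5, 6, 7] (List.product [0, 1] [0, 1 :: nat])"
  have "psi SG32_7 = sum_list (map (ord_by_squaring SG32_7) ?xs)"
    by (rule psi_eq_sum_list[OF group_SG32_7])
      (simp_all add: SG32_7_def square_def atLeast0_lessThan_8_eq atLeast0_lessThan_2_eq)
  also have "\<dots> = 167"
    by (simp add: SG32_7_def ord_by_squaring_def square_def)
  finally show ?thesis .
qed

lemma D8_eq_involution_sdp: "D8 = involution_sdp (mod_group 4) (\<lambda>r. (4 - r) mod 4)"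
  by (auto simp: D8_def involution_sdp_def mod_group_def mod_simps fun_eq_iff)

lemma group_D8: "group D8"
  unfolding D8_eq_involution_sdp
proof (rule group_involution_sdp)
  show "group (mod_group 4)" by (simp add: group_mod_group)
  show "(\<lambda>r. (4 - r) mod 4) \<in> hom (mod_group 4) (mod_group 4)"
    by (auto simp: hom_def mod_group_def atLeast0_lessThan_4_eq)
  show "(4 - (4 - x) mod 4) mod 4 = x" if "x \<in> carrier (mod_group 4)" for x
    using that by (auto simp: mod_group_def atLeast0_lessThan_4_eq)
qed

lemma carrier_cyclic_group_2: "carrier (cyclic_group 2) = {0, 1}"
  by (auto simp: integer_mod_group_def)

lemma card_carrier_C2_D8: "card (carrier (cyclic_group 2 \<times>\<times> D8)) = 16"
  by (simp add: carrier_cyclic_group_2 D8_def card_cartesian_product)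

lemma psi_C2_D8: "psi (cyclic_group 2 \<times>\<times> D8) = 39"
proof -
  let ?xs = "List.product [0, 1 :: int] (List.product [0, 1, 2, 3] [0, 1 :: nat])"
  have "carrier (cyclic_group 2 \<times>\<times> D8) = set ?xs"
    by (simp add: carrier_cyclic_group_2 D8_def atLeast0_lessThan_4_eq atLeast0_lessThan_2_eq)
  then have "psi (cyclic_group 2 \<times>\<times> D8) = sum_list (map (ord_by_squaring (cyclic_group 2 \<times>\<times> D8)) ?xs)"
    by (rule psi_eq_sum_list[OF DirProd_group[OF group_integer_mod_group group_D8]])
      (simp_all add: D8_def integer_mod_group_def square_def)
  also have "\<dots> = 39"
    by (simp add: D8_def integer_mod_group_def ord_by_squaring_def square_def)
  finally show ?thesis .
qed

lemma even_fst_SG32_7_mult: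
  assumes "x \<in> carrier SG32_7" "y \<in> carrier SG32_7"
  shows "even (fst (x \<otimes>\<^bsub>SG32_7\<^esub> y)) \<longleftrightarrow> (even (fst x) \<longleftrightarrow> even (fst y))"
  using assms by (auto simp: SG32_7_def Let_def dvd_mod_iff split: if_splits)

definition x_even_subgroup :: "(nat \<times> nat \<times> nat) set" where
  "x_even_subgroup = {x \<in> carrier SG32_7. even (fst x)}"

lemma subgroup_x_even_subgroup: "subgroup x_even_subgroup SG32_7"
proof -
  interpret group SG32_7 by (rule group_SG32_7)
  show ?thesis
  proof (rule subgroupI)
    fix x assume "x \<in> x_even_subgroup"
    then have x: "x \<in> carrier SG32_7" "even (fst x)"
      by (simp_all add: x_even_subgroup_def)
    then show "inv\<^bsub>SG32_7\<^esub> x \<in> x_even_subgroup"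
      using even_fst_SG32_7_mult[OF x(1) inv_closed[OF x(1)]]
      by (simp add: x_even_subgroup_def one_SG32_7)
  next
    show "x_even_subgroup \<noteq> {}"
      using one_closed by (auto simp: x_even_subgroup_def one_SG32_7)
  qed (auto simp: x_even_subgroup_def even_fst_SG32_7_mult)
qed

lemma x_even_subgroupE:
  assumes "x \<in> x_even_subgroup"
  obtains u j k where "x = (2 * u, j, k)" "u < 4" "j < 2" "k < 2"
  using assms by (auto simp: x_even_subgroup_def SG32_7_def elim!: evenE)

text \<open>In \<open>\<langle>x\<^sup>2, y, z\<rangle>\<close> the element \<open>y\<close> is central and \<open>z\<close> inverts \<open>x\<^sup>2\<close>, since
  \<open>z x\<^sup>2 z = (x y)\<^sup>2 = x\<^sup>6\<close>; so \<open>y\<close>, \<open>x\<^sup>2\<close> and \<open>z\<close> go to the generator of \<open>C\<^sub>2\<close>, the rotation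
  and the reflection of \<open>D\<^sub>8\<close>.\<close>

definition to_C2_D8 :: "nat \<times> nat \<times> nat \<Rightarrow> int \<times> nat \<times> nat" where
  "to_C2_D8 = (\<lambda>(i, j, k). (int j, i div 2, k))"

lemma to_C2_D8_mult:
  assumes "u' < 4" "j < 2" "k < 2" "j' < 2" "k' < 2"
  shows "to_C2_D8 ((2 * u, j, k) \<otimes>\<^bsub>SG32_7\<^esub> (2 * u', j', k')) =
    to_C2_D8 (2 * u, j, k) \<otimes>\<^bsub>cyclic_group 2 \<times>\<times> D8\<^esub> to_C2_D8 (2 * u', j', k')"
proof -
  define c where "c = (if k = 0 then 2 * u' else 6 * u' mod 8)"
  have "even c"
    by (simp add: c_def dvd_mod_iff)
  have c_div_2: "c div 2 mod 4 = (if k = 0 then u' else 4 - u') mod 4"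
    using assms(1) less_2_cases[OF assms(3)] by (auto simp: c_def dest!: less_4_cases)
  have "((2 * u + c + 4 * j * c) mod 8) div 2 = (u + (if k = 0 then u' else 4 - u')) mod 4"
    using double_mod_8_div_2[OF \<open>even c\<close>, of u j] c_div_2 by (metis mod_add_right_eq)
  moreover have "(2 * u, j, k) \<otimes>\<^bsub>SG32_7\<^esub> (2 * u', j', k') =
    ((2 * u + c + 4 * j * c) mod 8, (j + j') mod 2, (k + k') mod 2)"
    by (simp add: SG32_7_def c_def Let_def mod_simps)
  ultimately show ?thesis
    by (simp add: to_C2_D8_def D8_def integer_mod_group_def of_nat_mod)
qed

lemma iso_x_even_subgroup_C2_D8:
  "to_C2_D8 \<in> iso (SG32_7\<lparr>carrier := x_even_subgroup\<rparr>) (cyclic_group 2 \<times>\<times> D8)"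
proof (rule isoI)
  show "to_C2_D8 \<in> hom (SG32_7\<lparr>carrier := x_even_subgroup\<rparr>) (cyclic_group 2 \<times>\<times> D8)"
  proof (rule homI)
    fix x assume "x \<in> carrier (SG32_7\<lparr>carrier := x_even_subgroup\<rparr>)"
    then show "to_C2_D8 x \<in> carrier (cyclic_group 2 \<times>\<times> D8)"
      by (auto elim!: x_even_subgroupE simp: to_C2_D8_def carrier_cyclic_group_2 D8_def)
  next
    fix x y assume "x \<in> carrier (SG32_7\<lparr>carrier := x_even_subgroup\<rparr>)"
      "y \<in> carrier (SG32_7\<lparr>carrier := x_even_subgroup\<rparr>)"
    then show "to_C2_D8 (x \<otimes>\<^bsub>SG32_7\<lparr>carrier := x_even_subgroup\<rparr>\<^esub> y) =
      to_C2_D8 x \<otimes>\<^bsub>cyclic_group 2 \<times>\<times> D8\<^esub> to_C2_D8 y"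
      by (auto elim!: x_even_subgroupE intro: to_C2_D8_mult)
  qed
  show "bij_betw to_C2_D8 (carrier (SG32_7\<lparr>carrier := x_even_subgroup\<rparr>)) (carrier (cyclic_group 2 \<times>\<times> D8))"
    by (rule bij_betwI[where g = "\<lambda>(a, r, s). (2 * r, nat a, s)"])
      (auto elim!: x_even_subgroupE simp: to_C2_D8_def carrier_cyclic_group_2 D8_def x_even_subgroup_def SG32_7_def)
qed

lemma subgroup_iso_C2_D8:
  assumes "subgroup M SG32_7" and iso: "SG32_7\<lparr>carrier := M\<rparr> \<cong> cyclic_group 2 \<times>\<times> D8"
  shows "psi (SG32_7\<lparr>carrier := M\<rparr>) = 39" and "order SG32_7 = 2 * card M"
proof -
  have "group (SG32_7\<lparr>carrier := M\<rparr>)"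
    by (rule subgroup.subgroup_is_group[OF assms(1) group_SG32_7])
  with iso show "psi (SG32_7\<lparr>carrier := M\<rparr>) = 39"
    using psi_iso_eq[OF _ DirProd_group[OF group_integer_mod_group group_D8]] psi_C2_D8
    unfolding is_iso_def by fastforce
  show "order SG32_7 = 2 * card M"
    using iso_same_card[OF iso] card_carrier_C2_D8 order_SG32_7 by simp
qed

lemma coprime_order_SG32_7_cyclic_group:
  assumes "odd m"
  shows "coprime (order SG32_7) (order (cyclic_group m))"
proof -
  have "coprime ((2::nat) ^ 5) m"
    unfolding coprime_power_left_iff using assms by simp
  moreover have "order (cyclic_group m) = m"
    using assms by (simp add: order_def carrier_integer_mod_group odd_pos)
  ultimately show ?thesis
    by (simp add: order_SG32_7)
qed

theorem mainTheorem6: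
  shows "group SG32_7 \<and> psi SG32_7 = 167 \<and>
    (\<exists>M. maximal_subgroup M SG32_7 \<and> SG32_7\<lparr>carrier := M\<rparr> \<cong> cyclic_group 2 \<times>\<times> D8) \<and>
    (\<forall>M. maximal_subgroup M SG32_7 \<and> SG32_7\<lparr>carrier := M\<rparr> \<cong> cyclic_group 2 \<times>\<times> D8 \<longrightarrow>
       psi (SG32_7\<lparr>carrier := M\<rparr>) = 39 \<and>
       (\<forall>m::nat. odd m \<longrightarrow>
          (let G = SG32_7 \<times>\<times> cyclic_group m;
               H = M \<times> carrier (cyclic_group m)
           in maximal_subgroup H G \<and>
              psi G = 167 * psi (cyclic_group m) \<and>
              psi (G\<lparr>carrier := H\<rparr>) * (card (rcosets\<^bsub>G\<^esub> H))^2 = 156 * psi (cyclic_group m) \<and>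
              psi G > psi (G\<lparr>carrier := H\<rparr>) * (card (rcosets\<^bsub>G\<^esub> H))^2)))"
proof (intro conjI allI impI)
  show "group SG32_7"
    by (fact group_SG32_7)
  show "psi SG32_7 = 167"
    by (fact psi_SG32_7)
  have "SG32_7\<lparr>carrier := x_even_subgroup\<rparr> \<cong> cyclic_group 2 \<times>\<times> D8"
    using iso_x_even_subgroup_C2_D8 by (auto simp: is_iso_def)
  then show "\<exists>M. maximal_subgroup M SG32_7 \<and> SG32_7\<lparr>carrier := M\<rparr> \<cong> cyclic_group 2 \<times>\<times> D8"
    using maximal_subgroup_index_two[OF group_SG32_7 finite_carrier_SG32_7 subgroup_x_even_subgroup]
      subgroup_iso_C2_D8(2)[OF subgroup_x_even_subgroup] by blast
  fix M assume "maximal_subgroup M SG32_7 \<and> SG32_7\<lparr>carrier := M\<rparr> \<cong> cyclic_group 2 \<times>\<times> D8"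
  then have M: "subgroup M SG32_7" "SG32_7\<lparr>carrier := M\<rparr> \<cong> cyclic_group 2 \<times>\<times> D8"
    by (simp_all add: maximal_subgroup_def)
  show "psi (SG32_7\<lparr>carrier := M\<rparr>) = 39"
    by (rule subgroup_iso_C2_D8(1)[OF M])
  fix m :: nat assume "odd m"
  then have "finite (carrier (cyclic_group m))" "0 < psi (cyclic_group m)"
    using psi_pos[OF group_integer_mod_group] by (auto simp: carrier_integer_mod_group odd_pos)
  with maximal_subgroup_DirProd_index_two[OF group_SG32_7 finite_carrier_SG32_7 group_integer_mod_group _
      M(1) subgroup_iso_C2_D8(2)[OF M] coprime_order_SG32_7_cyclic_group[OF \<open>odd m\<close>]]
  show "let G = SG32_7 \<times>\<times> cyclic_group m; H = M \<times> carrier (cyclic_group m)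
    in maximal_subgroup H G \<and> psi G = 167 * psi (cyclic_group m) \<and>
      psi (G\<lparr>carrier := H\<rparr>) * (card (rcosets\<^bsub>G\<^esub> H))^2 = 156 * psi (cyclic_group m) \<and>
      psi G > psi (G\<lparr>carrier := H\<rparr>) * (card (rcosets\<^bsub>G\<^esub> H))^2"
    by (simp add: Let_def psi_SG32_7 subgroup_iso_C2_D8(1)[OF M])
qed

end
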